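(* Let $k,n,j\in\mathbb N_0$ and $Y\in\mathcal H^d_n$. If $j\ge k$, then for every $\xi\in\mathbb S^{d-1}$, $$\Delta^k\big[(1-\|x\|^2)^jY(x)\big]\Big|_{x=\xi}=4^k(-j)_k(-k)_{j-k}\frac{(n+\frac d2)_k}{(n+\frac d2)_{j-k}}\,Y(\xi),$$ and if $j<k$ the left-hand side is $0$.
   Context: $\mathcal H^d_n$ is the space of homogeneous harmonic polynomials of degree $n$ in $d$ variables, $\mathbb S^{d-1}$ the unit sphere, $\Delta$ the Laplacian in $\mathbb R^d$, and $(a)_0=1$, $(a)_m=a(a+1)\cdots(a+m-1)$ for $m\in\mathbb N$. *)

theory Defs
  imports "HOL-Analysis.Analysis"
begin

definition partial_deriv :: "'d::finite \<Rightarrow> (real^'d \<Rightarrow> real) \<Rightarrow> real^'d \<Rightarrow> real" where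
  "partial_deriv i f x = deriv (\<lambda>t. f (x + t *\<^sub>R axis i 1)) 0"

definition laplacian :: "(real^'d::finite \<Rightarrow> real) \<Rightarrow> real^'d \<Rightarrow> real" where
  "laplacian f = (\<lambda>x. \<Sum>i\<in>UNIV. partial_deriv i (partial_deriv i f) x)"

definition hom_poly :: "nat \<Rightarrow> (real^'d::finite \<Rightarrow> real) \<Rightarrow> bool" where
  "hom_poly n Y \<longleftrightarrow> (\<exists>(A :: ('d \<Rightarrow> nat) set) c. finite A \<and> (\<forall>\<alpha>\<in>A. (\<Sum>i\<in>UNIV. \<alpha> i) = n) \<and>
      (\<forall>x. Y x = (\<Sum>\<alpha>\<in>A. c \<alpha> * (\<Prod>i\<in>UNIV. (x $ i) ^ \<alpha> i))))"

definition hom_harmonic :: "nat \<Rightarrow> (real^'d::finite \<Rightarrow> real) \<Rightarrow> bool" where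
  "hom_harmonic n Y \<longleftrightarrow> hom_poly n Y \<and> (\<forall>x. laplacian Y x = 0)"

end

theory Submission
  imports Defs "HOL-Computational_Algebra.Polynomial"
begin

text \<open>For a homogeneous harmonic polynomial Y of degree n and a one-variable polynomial p, the
  product rule, Euler's identity sum_i x_i dY/dx_i = n Y and Delta Y = 0 give
  Delta [p(|x|^2) Y(x)] = q(|x|^2) Y(x) with q(t) = 4 t p''(t) + 4 (n + d/2) p'(t).
  Hence at a unit vector the left-hand side is c(j, k) Y(xi), where c(j, k) is the value at t = 1
  of the k-th iterate of p |-> q applied to (1 - t)^j. That operator sends (1 - t)^j to
  4 j (j - 1) (1 - t)^(j - 2) - 4 j (j - 1 + n + d/2) (1 - t)^(j - 1), so c satisfies a two-term
  recurrence which, together with c(j, 0) = [j = 0], determines it; the Pochhammer expression of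
  the theorem satisfies the same recurrence.\<close>

lemma linear_eq_sum_axis:
  fixes f :: "real^'d::finite \<Rightarrow> real"
  assumes "linear f"
  shows "f h = (\<Sum>i\<in>UNIV. h $ i * f (axis i 1))"
proof -
  have "f h = f (\<Sum>i\<in>UNIV. h $ i *\<^sub>R axis i 1)"
    using basis_expansion[of h] by (simp add: scalar_mult_eq_scaleR)
  also have "\<dots> = (\<Sum>i\<in>UNIV. h $ i * f (axis i 1))"
    using assms by (simp add: linear_sum linear_scale)
  finally show ?thesis .
qed

lemma has_derivative_imp_line_derivative:
  fixes f :: "real^'d::finite \<Rightarrow> real"
  assumes "(f has_derivative (\<lambda>h. \<Sum>i\<in>UNIV. h $ i * G i)) (at x)"
  shows "((\<lambda>t. f (x + t *\<^sub>R axis i 1)) has_real_derivative G i) (at 0)"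
proof -
  have line: "((\<lambda>t::real. x + t *\<^sub>R axis i 1) has_derivative (\<lambda>t. t *\<^sub>R axis i 1)) (at 0)"
    by (auto intro!: derivative_eq_intros)
  have "(f has_derivative (\<lambda>h. \<Sum>i\<in>UNIV. h $ i * G i)) (at (x + 0 *\<^sub>R axis i 1))"
    using assms by simp
  from has_derivative_compose[OF line this]
  have "((\<lambda>t. f (x + t *\<^sub>R axis i 1)) has_derivative
      (\<lambda>t. \<Sum>j\<in>UNIV. (t *\<^sub>R axis i 1) $ j * G j)) (at 0)"
    by (simp add: o_def)
  moreover have "(t *\<^sub>R axis i (1::real)) $ j * G j = (if j = i then G i * t else 0)" for t j
    by (simp add: axis_def)
  then have "(\<lambda>t. \<Sum>j\<in>UNIV. (t *\<^sub>R axis i (1::real)) $ j * G j) = (\<lambda>t. G i * t)"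
    by simp
  ultimately show ?thesis by (simp add: has_field_derivative_def)
qed

lemma real_polynomial_function_has_partials:
  fixes f :: "real^'d::finite \<Rightarrow> real"
  assumes "real_polynomial_function f"
  shows "\<exists>G. (\<forall>i. real_polynomial_function (G i)) \<and>
           (\<forall>x. (f has_derivative (\<lambda>h. \<Sum>i\<in>UNIV. h $ i * G i x)) (at x))"
  using assms
proof (induction rule: real_polynomial_function.induct)
  case (linear f)
  have "(\<lambda>h. \<Sum>i\<in>UNIV. h $ i * f (axis i 1)) = f"
    by (rule ext) (rule linear_eq_sum_axis[OF bounded_linear.linear[OF linear], symmetric])
  moreover have "(f has_derivative f) (at x)" for x
    using linear by (rule bounded_linear_imp_has_derivative)
  ultimately have "(f has_derivative (\<lambda>h. \<Sum>i\<in>UNIV. h $ i * f (axis i 1))) (at x)" for x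
    by simp
  then show ?case
    by (intro exI[of _ "\<lambda>i x. f (axis i 1)"]) auto
next
  case (const c)
  show ?case by (rule exI[of _ "\<lambda>i x. 0"]) auto
next
  case (add f g)
  then obtain F G where F: "\<forall>i. real_polynomial_function (F i)"
      "\<forall>x. (f has_derivative (\<lambda>h. \<Sum>i\<in>UNIV. h $ i * F i x)) (at x)"
    and G: "\<forall>i. real_polynomial_function (G i)"
      "\<forall>x. (g has_derivative (\<lambda>h. \<Sum>i\<in>UNIV. h $ i * G i x)) (at x)" by blast
  have "((\<lambda>x. f x + g x) has_derivative (\<lambda>h. \<Sum>i\<in>UNIV. h $ i * (F i x + G i x))) (at x)" for x
    using has_derivative_add[OF F(2)[rule_format] G(2)[rule_format]]
    by (simp add: distrib_left sum.distrib)
  with F G show ?case by (intro exI[of _ "\<lambda>i x. F i x + G i x"]) auto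
next
  case (mult f g)
  then obtain F G where F: "\<forall>i. real_polynomial_function (F i)"
      "\<forall>x. (f has_derivative (\<lambda>h. \<Sum>i\<in>UNIV. h $ i * F i x)) (at x)"
    and G: "\<forall>i. real_polynomial_function (G i)"
      "\<forall>x. (g has_derivative (\<lambda>h. \<Sum>i\<in>UNIV. h $ i * G i x)) (at x)" by blast
  have "((\<lambda>x. f x * g x) has_derivative
      (\<lambda>h. \<Sum>i\<in>UNIV. h $ i * (f x * G i x + F i x * g x))) (at x)" for x
    using has_derivative_mult[OF F(2)[rule_format] G(2)[rule_format]]
    by (simp add: sum_distrib_left sum_distrib_right sum.distrib algebra_simps)
  moreover have "real_polynomial_function (\<lambda>x. f x * G i x + F i x * g x)" for i
    using F G mult.hyps by (metis real_polynomial_function.intros)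
  ultimately show ?case
    by (intro exI[of _ "\<lambda>i x. f x * G i x + F i x * g x"]) blast
qed

lemma partial_deriv_eqI:
  "((\<lambda>t. f (x + t *\<^sub>R axis i 1)) has_real_derivative D) (at 0) \<Longrightarrow> partial_deriv i f x = D"
  unfolding partial_deriv_def by (rule DERIV_imp_deriv)

lemma real_polynomial_function_partial_deriv:
  fixes f :: "real^'d::finite \<Rightarrow> real"
  assumes "real_polynomial_function f"
  shows "real_polynomial_function (partial_deriv i f)"
    and "(f has_derivative (\<lambda>h. \<Sum>j\<in>UNIV. h $ j * partial_deriv j f x)) (at x)"
proof -
  obtain G where G: "\<forall>i. real_polynomial_function (G i)"
      "\<forall>x. (f has_derivative (\<lambda>h. \<Sum>i\<in>UNIV. h $ i * G i x)) (at x)"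
    using real_polynomial_function_has_partials[OF assms] by blast
  have "partial_deriv j f = G j" for j
  proof
    fix x
    show "partial_deriv j f x = G j x"
      using G(2) by (intro partial_deriv_eqI has_derivative_imp_line_derivative) blast
  qed
  with G show "real_polynomial_function (partial_deriv i f)"
    and "(f has_derivative (\<lambda>h. \<Sum>j\<in>UNIV. h $ j * partial_deriv j f x)) (at x)"
    by simp_all
qed

lemma real_polynomial_function_line_derivative:
  fixes f :: "real^'d::finite \<Rightarrow> real"
  assumes "real_polynomial_function f"
  shows "((\<lambda>t. f (x + t *\<^sub>R axis i 1)) has_real_derivative partial_deriv i f x) (at 0)"
  using real_polynomial_function_partial_deriv(2)[OF assms] by (rule has_derivative_imp_line_derivative)

lemma euler_homogeneous:
  fixes f :: "real^'d::finite \<Rightarrow> real"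
  assumes deriv: "(f has_derivative (\<lambda>h. \<Sum>i\<in>UNIV. h $ i * partial_deriv i f x)) (at x)"
    and hom: "\<And>s. f (s *\<^sub>R x) = s ^ n * f x"
  shows "(\<Sum>i\<in>UNIV. x $ i * partial_deriv i f x) = real n * f x"
proof -
  have ray: "((\<lambda>s::real. s *\<^sub>R x) has_derivative (\<lambda>s. s *\<^sub>R x)) (at 1)"
    by (auto intro!: derivative_eq_intros)
  have "(f has_derivative (\<lambda>h. \<Sum>i\<in>UNIV. h $ i * partial_deriv i f x)) (at (1 *\<^sub>R x))"
    using deriv by simp
  from has_derivative_compose[OF ray this]
  have "((\<lambda>s. f (s *\<^sub>R x)) has_derivative
      (\<lambda>s. s * (\<Sum>i\<in>UNIV. x $ i * partial_deriv i f x))) (at 1)"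
    by (simp add: o_def sum_distrib_left mult.assoc)
  then have "((\<lambda>s. f (s *\<^sub>R x)) has_real_derivative (\<Sum>i\<in>UNIV. x $ i * partial_deriv i f x)) (at 1)"
    by (simp add: has_field_derivative_def mult.commute[of _ "sum _ _"])
  moreover have "((\<lambda>s. f (s *\<^sub>R x)) has_real_derivative real n * f x) (at 1)"
    unfolding hom by (auto intro!: derivative_eq_intros)
  ultimately show ?thesis by (rule DERIV_unique)
qed

lemma
  fixes Y :: "real^'d::finite \<Rightarrow> real"
  assumes "hom_poly n Y"
  shows hom_poly_real_polynomial_function: "real_polynomial_function Y"
    and hom_poly_homogeneous: "Y (s *\<^sub>R x) = s ^ n * Y x"
proof -
  obtain A c where A: "finite A" "\<forall>\<alpha>\<in>A. (\<Sum>i\<in>UNIV. \<alpha> i) = n"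
      and Y: "Y = (\<lambda>x. \<Sum>\<alpha>\<in>A. c \<alpha> * (\<Prod>i\<in>UNIV. (x $ i) ^ \<alpha> i))"
    using assms unfolding hom_poly_def by blast
  have "real_polynomial_function (\<lambda>x. (x $ i) ^ m)" for i and m :: nat
    by (intro real_polynomial_function_power real_polynomial_function.intros bounded_linear_vec_nth)
  then show "real_polynomial_function Y"
    unfolding Y using A(1)
    by (intro real_polynomial_function_sum real_polynomial_function_prod
        real_polynomial_function.intros(2,4)) auto
  have "(\<Prod>i\<in>UNIV. ((s *\<^sub>R x) $ i) ^ \<alpha> i) = s ^ n * (\<Prod>i\<in>UNIV. (x $ i) ^ \<alpha> i)"
    if "\<alpha> \<in> A" for \<alpha>
    using A(2) that by (simp add: power_mult_distrib prod.distrib flip: power_sum)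
  then show "Y (s *\<^sub>R x) = s ^ n * Y x"
    unfolding Y by (simp add: sum_distrib_left algebra_simps cong: sum.cong)
qed

lemma norm_sq_add_line:
  fixes x :: "real^'d::finite"
  shows "(norm (x + t *\<^sub>R axis i 1))\<^sup>2 = (norm x)\<^sup>2 + 2 * t * x $ i + t\<^sup>2"
  unfolding power2_norm_eq_inner
  by (simp add: inner_add inner_axis inner_commute algebra_simps power2_eq_square)

lemma poly_norm_sq_line_derivative:
  fixes x :: "real^'d::finite"
  shows "((\<lambda>t. poly p ((norm (x + t *\<^sub>R axis i 1))\<^sup>2)) has_real_derivative
           poly (pderiv p) ((norm x)\<^sup>2) * (2 * x $ i)) (at 0)"
proof -
  have "((\<lambda>t. (norm x)\<^sup>2 + 2 * t * x $ i + t\<^sup>2) has_real_derivative 2 * x $ i) (at 0)"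
    by (auto intro!: derivative_eq_intros)
  from DERIV_chain2[OF poly_DERIV this] show ?thesis
    by (simp add: norm_sq_add_line)
qed

lemma partial_deriv_poly_norm_sq_mult:
  fixes Y :: "real^'d::finite \<Rightarrow> real"
  assumes "real_polynomial_function Y"
  shows "partial_deriv i (\<lambda>x. poly p ((norm x)\<^sup>2) * Y x) x =
    poly (pderiv p) ((norm x)\<^sup>2) * (2 * x $ i) * Y x + poly p ((norm x)\<^sup>2) * partial_deriv i Y x"
proof -
  from partial_deriv_eqI[OF DERIV_mult[OF poly_norm_sq_line_derivative
      real_polynomial_function_line_derivative[OF assms]]]
  show ?thesis by (simp add: algebra_simps)
qed

lemma partial_deriv2_poly_norm_sq_mult:
  fixes Y :: "real^'d::finite \<Rightarrow> real"
  assumes Y: "real_polynomial_function Y"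
  shows "partial_deriv i (partial_deriv i (\<lambda>x. poly p ((norm x)\<^sup>2) * Y x)) x =
    poly (pderiv (pderiv p)) ((norm x)\<^sup>2) * (4 * (x $ i)\<^sup>2) * Y x
    + 2 * poly (pderiv p) ((norm x)\<^sup>2) * Y x
    + 4 * poly (pderiv p) ((norm x)\<^sup>2) * (x $ i * partial_deriv i Y x)
    + poly p ((norm x)\<^sup>2) * partial_deriv i (partial_deriv i Y) x"
proof -
  let ?z = "\<lambda>t. x + t *\<^sub>R axis i 1"
  have coord: "((\<lambda>t. 2 * ?z t $ i) has_real_derivative 2) (at 0)"
    by (auto simp: axis_def intro!: derivative_eq_intros)
  have "((\<lambda>t. poly (pderiv p) ((norm (?z t))\<^sup>2) * (2 * ?z t $ i) * Y (?z t)
          + poly p ((norm (?z t))\<^sup>2) * partial_deriv i Y (?z t)) has_real_derivative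
     (poly (pderiv (pderiv p)) ((norm x)\<^sup>2) * (2 * x $ i) * (2 * ?z 0 $ i)
        + 2 * poly (pderiv p) ((norm (?z 0))\<^sup>2)) * Y (?z 0)
     + partial_deriv i Y x * (poly (pderiv p) ((norm (?z 0))\<^sup>2) * (2 * ?z 0 $ i))
     + (poly (pderiv p) ((norm x)\<^sup>2) * (2 * x $ i) * partial_deriv i Y (?z 0)
        + partial_deriv i (partial_deriv i Y) x * poly p ((norm (?z 0))\<^sup>2))) (at 0)"
    by (intro DERIV_add DERIV_mult poly_norm_sq_line_derivative coord
        real_polynomial_function_line_derivative Y real_polynomial_function_partial_deriv(1))
  from partial_deriv_eqI[OF this] show ?thesis
    unfolding partial_deriv_poly_norm_sq_mult[OF Y, abs_def] by (simp add: algebra_simps power2_eq_square)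
qed

definition radial_laplacian :: "real \<Rightarrow> real poly \<Rightarrow> real poly" where
  "radial_laplacian b p = smult 4 ([:0, 1:] * pderiv (pderiv p)) + smult (4 * b) (pderiv p)"

lemma laplacian_poly_norm_sq_mult:
  fixes Y :: "real^'d::finite \<Rightarrow> real"
  assumes Y: "real_polynomial_function Y"
    and hom: "\<And>s x. Y (s *\<^sub>R x) = s ^ n * Y x"
    and harmonic: "\<And>x. laplacian Y x = 0"
  shows "laplacian (\<lambda>x. poly p ((norm x)\<^sup>2) * Y x) =
    (\<lambda>x. poly (radial_laplacian (real n + real CARD('d) / 2) p) ((norm x)\<^sup>2) * Y x)"
proof
  fix x :: "real^'d"
  have norm_sq: "(\<Sum>i\<in>UNIV. (x $ i)\<^sup>2) = (norm x)\<^sup>2"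
    unfolding power2_norm_eq_inner by (simp add: inner_vec_def power2_eq_square)
  have euler: "(\<Sum>i\<in>UNIV. x $ i * partial_deriv i Y x) = real n * Y x"
    using euler_homogeneous real_polynomial_function_partial_deriv(2)[OF Y] hom by blast
  have "laplacian (\<lambda>x. poly p ((norm x)\<^sup>2) * Y x) x =
      poly (pderiv (pderiv p)) ((norm x)\<^sup>2) * 4 * (\<Sum>i\<in>UNIV. (x $ i)\<^sup>2) * Y x
      + 2 * real CARD('d) * poly (pderiv p) ((norm x)\<^sup>2) * Y x
      + 4 * poly (pderiv p) ((norm x)\<^sup>2) * (\<Sum>i\<in>UNIV. x $ i * partial_deriv i Y x)
      + poly p ((norm x)\<^sup>2) * laplacian Y x"
    unfolding laplacian_def partial_deriv2_poly_norm_sq_mult[OF Y]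
    by (simp add: sum.distrib sum_distrib_left sum_distrib_right algebra_simps)
  also have "\<dots> = poly (radial_laplacian (real n + real CARD('d) / 2) p) ((norm x)\<^sup>2) * Y x"
    unfolding norm_sq euler harmonic radial_laplacian_def by (simp add: algebra_simps)
  finally show "laplacian (\<lambda>x. poly p ((norm x)\<^sup>2) * Y x) x =
      poly (radial_laplacian (real n + real CARD('d) / 2) p) ((norm x)\<^sup>2) * Y x" .
qed

lemma funpow_laplacian_poly_norm_sq_mult:
  fixes Y :: "real^'d::finite \<Rightarrow> real"
  assumes "real_polynomial_function Y"
    and "\<And>s x. Y (s *\<^sub>R x) = s ^ n * Y x"
    and "\<And>x. laplacian Y x = 0"
  shows "(laplacian ^^ k) (\<lambda>x. poly p ((norm x)\<^sup>2) * Y x) =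
    (\<lambda>x. poly ((radial_laplacian (real n + real CARD('d) / 2) ^^ k) p) ((norm x)\<^sup>2) * Y x)"
  by (induction k) (simp_all add: laplacian_poly_norm_sq_mult[OF assms])

lemma radial_laplacian_diff:
  "radial_laplacian b (p - q) = radial_laplacian b p - radial_laplacian b q"
  by (simp add: radial_laplacian_def pderiv_diff algebra_simps smult_diff_right)

lemma radial_laplacian_smult: "radial_laplacian b (smult c p) = smult c (radial_laplacian b p)"
  by (simp add: radial_laplacian_def pderiv_smult algebra_simps smult_add_right)

lemma funpow_radial_laplacian_smult_diff:
  "(radial_laplacian b ^^ k) (smult c p - smult c' q) =
    smult c ((radial_laplacian b ^^ k) p) - smult c' ((radial_laplacian b ^^ k) q)"
  by (induction k) (simp_all add: radial_laplacian_diff radial_laplacian_smult)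

lemma pderiv_one_minus_power: "pderiv ([:1, -1:] ^ j) = smult (- real j) ([:1, -1:] ^ (j - 1))"
  by (simp add: pderiv_power pderiv_pCons)

text \<open>For j < 2 the truncated exponents are harmless: their coefficients vanish.\<close>

lemma radial_laplacian_one_minus_power:
  "radial_laplacian b ([:1, -1:] ^ j) =
    smult (4 * real j * (real j - 1)) ([:1, -1:] ^ (j - 2))
    - smult (4 * real j * (real j - 1 + b)) ([:1, -1:] ^ (j - 1))"
proof (cases "j < 2")
  case True
  then consider "j = 0" | "j = 1" by linarith
  then show ?thesis by cases (simp_all add: radial_laplacian_def pderiv_pCons)
next
  case False
  then obtain m where j: "j = Suc (Suc m)" by (metis add_2_eq_Suc le_add_diff_inverse not_less)
  have x: "[:0, 1:] * [:1, -1:] ^ m = [:1, -1:] ^ m - [:1, -1 :: real:] ^ Suc m"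
    by (simp add: algebra_simps one_pCons)
  have "radial_laplacian b ([:1, -1:] ^ j) =
      smult (4 * (real j * real (Suc m))) ([:1, -1:] ^ m - [:1, -1:] ^ Suc m)
      + smult (4 * b * (- real j)) ([:1, -1:] ^ Suc m)"
    unfolding radial_laplacian_def pderiv_one_minus_power pderiv_smult j
    by (simp del: power_Suc mult_pCons_left add: mult_smult_right x) (simp add: algebra_simps)
  also have "\<dots> = smult (4 * real j * (real j - 1)) ([:1, -1:] ^ m)
      - smult (4 * real j * (real j - 1 + b)) ([:1, -1:] ^ Suc m)"
    by (simp del: power_Suc add: j smult_diff_right algebra_simps
        flip: smult_add_left smult_diff_left)
  finally show ?thesis by (simp add: j)
qed

definition radial_coeff :: "real \<Rightarrow> nat \<Rightarrow> nat \<Rightarrow> real" where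
  "radial_coeff b j k =
    (if k \<le> j then 4 ^ k * pochhammer (- real j) k * pochhammer (- real k) (j - k)
       * pochhammer b k / pochhammer b (j - k) else 0)"

lemma radial_coeff_eq: "k \<le> j \<Longrightarrow> radial_coeff b j k =
    4 ^ k * pochhammer (- real j) k * pochhammer (- real k) (j - k) * pochhammer b k / pochhammer b (j - k)"
  unfolding radial_coeff_def by simp

lemma radial_coeff_Suc_diagonal:
  "radial_coeff b (Suc k) (Suc k) = - 4 * real (Suc k) * (real k + b) * radial_coeff b k k"
proof -
  have top: "pochhammer (- real (Suc k)) (Suc k) = - real (Suc k) * pochhammer (- real k) k"
    unfolding pochhammer_rec by (simp add: algebra_simps)
  show ?thesis
    unfolding radial_coeff_eq[OF le_refl] diff_self_eq_0 pochhammer_rec'[of b] top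
    by (simp add: algebra_simps)
qed

lemma radial_coeff_Suc_off_diagonal:
  assumes "b > 0"
  shows "radial_coeff b (k + m + 2) (Suc k) =
    4 * real (k + m + 2) * real (k + m + 1) * radial_coeff b (k + m) k
    - 4 * real (k + m + 2) * (real (k + m + 1) + b) * radial_coeff b (k + m + 1) k"
proof -
  define P where "P = pochhammer (- real (k + m + 1)) k"
  define Q where "Q = pochhammer (- real k) m"
  define B where "B = pochhammer b k"
  define C where "C = pochhammer b m"
  have nonzero: "C \<noteq> 0" "b + real m \<noteq> 0"
    using pochhammer_pos[OF assms] assms unfolding C_def by (auto simp: less_le)
  have top: "pochhammer (- real (k + m + 2)) (Suc k) = - real (k + m + 2) * P"
    unfolding P_def pochhammer_rec by (simp add: algebra_simps)
  have "pochhammer (- real (k + m + 1)) (Suc k) = - real (k + m + 1) * pochhammer (- real (k + m)) k"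
    unfolding pochhammer_rec by (simp add: algebra_simps)
  moreover have "pochhammer (- real (k + m + 1)) (Suc k) = - real (Suc m) * P"
    unfolding P_def pochhammer_rec' by (simp add: algebra_simps)
  ultimately have lower: "pochhammer (- real (k + m)) k = real (Suc m) * P / real (k + m + 1)"
    by (simp add: field_simps)
  have middle: "pochhammer (- real (Suc k)) (Suc m) = - real (Suc k) * Q"
    unfolding Q_def pochhammer_rec by (simp add: algebra_simps)
  have diffs: "k + m + 2 - Suc k = Suc m" "k + m + 1 - k = Suc m" "k + m - k = m" by simp_all
  have le: "Suc k \<le> k + m + 2" "k \<le> k + m + 1" "k \<le> k + m" by simp_all
  define D where "D = P * Q * B / ((b + real m) * C)"
  have lhs: "radial_coeff b (k + m + 2) (Suc k) =
      4 ^ Suc k * real (k + m + 2) * real (Suc k) * (b + real k) * D"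
    unfolding radial_coeff_eq[OF le(1)] diffs top middle pochhammer_rec'[of b] B_def C_def D_def
    by (simp add: mult_ac) (simp add: algebra_simps)
  have shifted: "radial_coeff b (k + m + 1) k = 4 ^ k * (real m - real k) * D"
    unfolding radial_coeff_eq[OF le(2)] diffs pochhammer_rec'[of _ m] P_def Q_def B_def C_def D_def
    by (simp add: mult_ac)
  have "real (k + m + 1) * radial_coeff b (k + m) k = 4 ^ k * real (Suc m) * P * Q * B / C"
    unfolding radial_coeff_eq[OF le(3)] diffs lower B_def[symmetric] C_def[symmetric]
      Q_def[symmetric] by (simp del: of_nat_add of_nat_Suc)
  also have "\<dots> = 4 ^ k * real (Suc m) * (b + real m) * D"
    unfolding D_def using nonzero by simp
  finally have unshifted:
    "real (k + m + 1) * radial_coeff b (k + m) k = 4 ^ k * real (Suc m) * (b + real m) * D" .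
  show ?thesis
    unfolding lhs shifted mult.assoc[of _ "real (k + m + 1)"] unshifted
    by (simp add: algebra_simps)
qed

lemma radial_coeff_Suc:
  assumes "b > 0"
  shows "radial_coeff b j (Suc k) =
    4 * real j * (real j - 1) * radial_coeff b (j - 2) k
    - 4 * real j * (real j - 1 + b) * radial_coeff b (j - 1) k"
proof -
  consider "j \<le> k" | "j = Suc k" | "k + 2 \<le> j"
    by linarith
  then show ?thesis
  proof cases
    case 1
    then show ?thesis by (cases "j = 0") (auto simp: radial_coeff_def)
  next
    case 2
    have "real j * (real j - 1) * radial_coeff b (j - 2) k = 0"
      using 2 by (cases k) (simp_all add: radial_coeff_def)
    then show ?thesis
      using radial_coeff_Suc_diagonal[of b k] by (simp add: 2 algebra_simps)
  next
    case 3
    define m where "m = j - (k + 2)"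
    with 3 have j: "j = k + m + 2" by simp
    show ?thesis
      unfolding j using radial_coeff_Suc_off_diagonal[OF assms, of k m] by (simp add: algebra_simps)
  qed
qed

lemma poly_funpow_radial_laplacian_one_minus_power:
  assumes "b > 0"
  shows "poly ((radial_laplacian b ^^ k) ([:1, -1:] ^ j)) 1 = radial_coeff b j k"
proof (induction k arbitrary: j)
  case 0
  show ?case by (simp add: radial_coeff_def pochhammer_0_left)
next
  case (Suc k)
  have "(radial_laplacian b ^^ Suc k) ([:1, -1:] ^ j) =
      smult (4 * real j * (real j - 1)) ((radial_laplacian b ^^ k) ([:1, -1:] ^ (j - 2)))
      - smult (4 * real j * (real j - 1 + b)) ((radial_laplacian b ^^ k) ([:1, -1:] ^ (j - 1)))"
    by (simp only: funpow_Suc_right o_apply radial_laplacian_one_minus_power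
        funpow_radial_laplacian_smult_diff)
  then show ?case
    by (simp only: poly_diff poly_smult Suc.IH radial_coeff_Suc[OF assms])
qed

theorem lemma3p5:
  fixes Y :: "real^'d \<Rightarrow> real" and k n j :: nat and \<xi> :: "real^'d"
  assumes "hom_harmonic n Y" and "norm \<xi> = 1"
  shows "(j \<ge> k \<longrightarrow>
           (laplacian ^^ k) (\<lambda>x. (1 - (norm x)\<^sup>2) ^ j * Y x) \<xi> =
             4 ^ k * pochhammer (- real j) k * pochhammer (- real k) (j - k)
               * pochhammer (real n + real CARD('d) / 2) k
               / pochhammer (real n + real CARD('d) / 2) (j - k) * Y \<xi>)
       \<and> (j < k \<longrightarrow> (laplacian ^^ k) (\<lambda>x. (1 - (norm x)\<^sup>2) ^ j * Y x) \<xi> = 0)"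
proof -
  define b where "b = real n + real CARD('d) / 2"
  have "b > 0" unfolding b_def by (simp add: add_nonneg_pos)
  have Y: "real_polynomial_function Y" "\<And>s x. Y (s *\<^sub>R x) = s ^ n * Y x" "\<And>x. laplacian Y x = 0"
    using assms(1) hom_poly_real_polynomial_function hom_poly_homogeneous
    unfolding hom_harmonic_def by blast+
  have radial: "(\<lambda>x. (1 - (norm x)\<^sup>2) ^ j * Y x) = (\<lambda>x. poly ([:1, -1:] ^ j) ((norm x)\<^sup>2) * Y x)"
    by (simp add: poly_power)
  have "(laplacian ^^ k) (\<lambda>x. (1 - (norm x)\<^sup>2) ^ j * Y x) \<xi> =
      poly ((radial_laplacian b ^^ k) ([:1, -1:] ^ j)) 1 * Y \<xi>"
    unfolding radial funpow_laplacian_poly_norm_sq_mult[OF Y] b_def using assms(2) by simp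
  then have "(laplacian ^^ k) (\<lambda>x. (1 - (norm x)\<^sup>2) ^ j * Y x) \<xi> = radial_coeff b j k * Y \<xi>"
    unfolding poly_funpow_radial_laplacian_one_minus_power[OF \<open>b > 0\<close>] .
  then show ?thesis
    unfolding radial_coeff_def b_def by simp
qed

end
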